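(* In the stochastic opinion dynamics described below, for every agent $i$, almost surely $\psi_{i,t}=0$ for infinitely many $t$ and $\psi_{i,t}=1$ for infinitely many $t$.
   Context: Let $A=(a_{i,j})$ be a symmetric $n\times n$ matrix with nonnegative entries, the weighted adjacency matrix of an undirected graph $G$ on $\{1,\dots,n\}$ (self-loops allowed) that is connected and not bipartite; let $\deg(i)=\sum_j a_{i,j}$. Each agent $i$ has a bias parameter $\gamma_i>0$, and $\mathrm{diag}(\gamma_1,\dots,\gamma_n)\neq I$. Define $f(\mu,\gamma)=\frac{\gamma\mu}{1+(\gamma-1)\mu}$ for $\mu\in[0,1]$, and for $\beta\in[0,1]^n$ let $\mu_i(\beta)=\frac{1}{\deg(i)}\sum_j a_{i,j}\beta_j$. Dynamics: $\beta_i(1)\in(0,1)$ are given initial values. For each $t\ge1$, conditionally on the history $\mathcal{H}_t$ (all declarations up to time $t$), the declarations $\psi_{i,t+1}\in\{0,1\}$, $i=1,\dots,n$, are independent with $\mathbb{P}[\psi_{i,t+1}=1\mid\mathcal{H}_t]=f(\mu_i(\beta(t)),\gamma_i)$, and $\beta_i(t+1)=\frac{t}{t+1}\beta_i(t)+\frac{1}{t+1}\psi_{i,t+1}$. *)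

theory Defs
  imports "HOL-Probability.Probability"
begin

text \<open>Agents are 0..n-1. A is the weighted adjacency matrix (only entries with
indices below n matter).\<close>

definition edge_rel :: "nat \<Rightarrow> (nat \<Rightarrow> nat \<Rightarrow> real) \<Rightarrow> (nat \<times> nat) set" where
  "edge_rel n A = {(i, j). i < n \<and> j < n \<and> A i j > 0}"

definition graph_connected :: "nat \<Rightarrow> (nat \<Rightarrow> nat \<Rightarrow> real) \<Rightarrow> bool" where
  "graph_connected n A \<longleftrightarrow> (\<forall>i<n. \<forall>j<n. (i, j) \<in> (edge_rel n A)\<^sup>*)"

definition graph_bipartite :: "nat \<Rightarrow> (nat \<Rightarrow> nat \<Rightarrow> real) \<Rightarrow> bool" where
  "graph_bipartite n A \<longleftrightarrow>
     (\<exists>c :: nat \<Rightarrow> bool. \<forall>i<n. \<forall>j<n. A i j > 0 \<longrightarrow> c i \<noteq> c j)"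

definition deg :: "nat \<Rightarrow> (nat \<Rightarrow> nat \<Rightarrow> real) \<Rightarrow> nat \<Rightarrow> real" where
  "deg n A i = (\<Sum>j<n. A i j)"

definition mu :: "nat \<Rightarrow> (nat \<Rightarrow> nat \<Rightarrow> real) \<Rightarrow> (nat \<Rightarrow> real) \<Rightarrow> nat \<Rightarrow> real" where
  "mu n A \<beta> i = (1 / deg n A i) * (\<Sum>j<n. A i j * \<beta> j)"

definition fbias :: "real \<Rightarrow> real \<Rightarrow> real" where
  "fbias \<mu> \<gamma> = \<gamma> * \<mu> / (1 + (\<gamma> - 1) * \<mu>)"

text \<open>Empirical opinion beta_i(t), computed from the initial values b and a
history h of declarations (h i s = psi_{i,s}, used for s = 2..t).
beta_i(1) = b i; beta_i(t+1) = t/(t+1) beta_i(t) + 1/(t+1) psi_{i,t+1}.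
The value at t = 0 is a dummy.\<close>

fun beta :: "(nat \<Rightarrow> real) \<Rightarrow> (nat \<Rightarrow> nat \<Rightarrow> bool) \<Rightarrow> nat \<Rightarrow> nat \<Rightarrow> real" where
  "beta b h i 0 = b i"
| "beta b h i (Suc 0) = b i"
| "beta b h i (Suc (Suc t)) =
     real (Suc t) / real (Suc (Suc t)) * beta b h i (Suc t)
     + (1 / real (Suc (Suc t))) * (if h i (Suc (Suc t)) then 1 else 0)"

end

theory Submission
  imports Defs "HOL-Analysis.Harmonic_Numbers"
begin

text \<open>Whatever the history, agent \<open>i\<close> declares either value at time \<open>t + 1\<close> with probability
  at least \<open>c / t\<close>: the running averages \<open>\<beta>\<close> stay in \<open>[m/t, 1 - m/t]\<close> since they start
  in \<open>(0, 1)\<close>, so does the neighbourhood average \<open>\<mu>\<close> (the degree is positive), and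
  \<open>f(\<mu>, \<gamma>) \<ge> min \<gamma> (1/\<gamma>) \<mu>\<close>, \<open>1 - f(\<mu>, \<gamma>) \<ge> min \<gamma> (1/\<gamma>) (1 - \<mu>)\<close>.
  Conditioning step by step, the probability of avoiding a value from time \<open>m + 1\<close> to \<open>N\<close> is
  at most \<open>\<Prod>k\<in>{m..<N}. 1 - c'/k \<le> exp (- c' (H\<^sub>N - H\<^sub>m))\<close>, which tends to \<open>0\<close>
  because the harmonic series diverges: a conditional second Borel--Cantelli lemma.\<close>

lemma prod_lessThan_if_eq:
  fixes a c :: "'b::comm_monoid_mult"
  assumes "i < n"
  shows "(\<Prod>j<n. if j = i then a else c) = a * c ^ (n - 1)"
proof -
  have "{..<n} \<inter> {j. j = i} = {i}" "{..<n} \<inter> - {j. j = i} = {..<n} - {i}"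
    using assms by auto
  then show ?thesis using assms by (simp add: prod.If_cases)
qed

lemma prod_one_minus_le_exp:
  fixes x :: "'b \<Rightarrow> real"
  assumes "\<And>k. k \<in> A \<Longrightarrow> x k \<le> 1"
  shows "(\<Prod>k\<in>A. 1 - x k) \<le> exp (- (\<Sum>k\<in>A. x k))"
proof -
  have "(\<Prod>k\<in>A. 1 - x k) \<le> (\<Prod>k\<in>A. exp (- x k))"
    using assms exp_ge_add_one_self[of "- x _"] by (intro prod_mono) auto
  also have "\<dots> = exp (- (\<Sum>k\<in>A. x k))"
    by (cases "finite A") (simp_all add: exp_sum sum_negf[symmetric])
  finally show ?thesis .
qed

lemma harm_diff_le_sum:
  assumes "1 \<le> m" "m \<le> N"
  shows "(harm N :: real) - harm m \<le> (\<Sum>k\<in>{m..<N}. 1 / real k)"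
  using assms(2)
proof (induction N rule: nat_induct_at_least)
  case (Suc N)
  have "(harm (Suc N) :: real) - harm m = (harm N - harm m) + 1 / real (Suc N)"
    by (simp add: harm_Suc field_simps)
  also have "\<dots> \<le> (\<Sum>k\<in>{m..<N}. 1 / real k) + 1 / real N"
    using Suc assms(1) by (intro add_mono) (auto simp: frac_le)
  also have "\<dots> = (\<Sum>k\<in>{m..<Suc N}. 1 / real k)" using Suc by simp
  finally show ?case .
qed simp

lemma LIMSEQ_prod_one_minus_inverse:
  assumes a: "0 < a" "a \<le> 1" and m: "1 \<le> m"
  shows "(\<lambda>N. \<Prod>k\<in>{m..<N}. 1 - a / real k) \<longlonglongrightarrow> 0"
proof (rule tendsto_sandwich)
  show "\<forall>\<^sub>F N in sequentially. 0 \<le> (\<Prod>k\<in>{m..<N}. 1 - a / real k)"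
    using a m by (intro always_eventually allI prod_nonneg) auto
  have "(\<Prod>k\<in>{m..<N}. 1 - a / real k) \<le> exp (- (a * (harm N - harm m)))" if "m \<le> N" for N
  proof -
    have "(\<Prod>k\<in>{m..<N}. 1 - a / real k) \<le> exp (- (\<Sum>k\<in>{m..<N}. a / real k))"
      using a m by (intro prod_one_minus_le_exp) auto
    also have "\<dots> \<le> exp (- (a * (harm N - harm m)))"
    proof -
      have "a * (harm N - harm m) \<le> a * (\<Sum>k\<in>{m..<N}. 1 / real k)"
        using harm_diff_le_sum[OF m that] a by (intro mult_left_mono) auto
      then show ?thesis by (simp add: sum_distrib_left)
    qed
    finally show ?thesis .
  qed
  then show "\<forall>\<^sub>F N in sequentially. (\<Prod>k\<in>{m..<N}. 1 - a / real k) \<le> exp (- (a * (harm N - harm m)))"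
    by (rule eventually_sequentiallyI)
  have "filterlim (\<lambda>N. a * (harm N - harm m) :: real) at_top sequentially"
    using a filterlim_tendsto_add_at_top[OF tendsto_const harm_at_top, of "- harm m"]
    by (intro filterlim_tendsto_pos_mult_at_top[OF tendsto_const]) auto
  then show "(\<lambda>N. exp (- (a * (harm N - harm m)))) \<longlonglongrightarrow> 0"
    by (intro filterlim_compose[OF exp_at_bot]) (simp add: filterlim_uminus_at_top)
qed simp

text \<open>\<open>P h t j\<close> is the probability that agent \<open>j\<close> declares \<open>True\<close> at time \<open>t + 1\<close>, given
  that the declarations at times \<open>2..t\<close> are those recorded in \<open>h\<close>.\<close>

locale declaration_process = prob_space M for M :: "'a measure" +
  fixes n :: nat
    and psi :: "nat \<Rightarrow> nat \<Rightarrow> 'a \<Rightarrow> bool"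
    and P :: "(nat \<Rightarrow> nat \<Rightarrow> bool) \<Rightarrow> nat \<Rightarrow> nat \<Rightarrow> real"
  assumes measurable_psi: "\<And>j t. j < n \<Longrightarrow> 2 \<le> t \<Longrightarrow> psi j t \<in> measurable M (count_space UNIV)"
    and measure_next_declarations: "\<And>t h x. 1 \<le> t \<Longrightarrow>
      measure M {\<omega> \<in> space M. (\<forall>s\<in>{2..t}. \<forall>j<n. psi j s \<omega> = h j s)
                             \<and> (\<forall>j<n. psi j (t + 1) \<omega> = x j)}
      = measure M {\<omega> \<in> space M. \<forall>s\<in>{2..t}. \<forall>j<n. psi j s \<omega> = h j s}
        * (\<Prod>j<n. if x j then P h t j else 1 - P h t j)"
begin

definition cylinder :: "nat \<Rightarrow> (nat \<Rightarrow> nat \<Rightarrow> bool) \<Rightarrow> 'a set" where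
  "cylinder t h = {\<omega> \<in> space M. \<forall>s\<in>{2..t}. \<forall>j<n. psi j s \<omega> = h j s}"

definition history :: "nat \<Rightarrow> 'a \<Rightarrow> (nat \<times> nat) set" where
  "history t \<omega> = {(j, s). j < n \<and> s \<in> {2..t} \<and> psi j s \<omega>}"

definition avoiding :: "nat \<Rightarrow> bool \<Rightarrow> nat \<Rightarrow> nat \<Rightarrow> 'a set" where
  "avoiding i v m t = {\<omega> \<in> space M. \<forall>s\<in>{Suc m..t}. psi i s \<omega> \<noteq> v}"

lemma sets_psi_eq: "j < n \<Longrightarrow> 2 \<le> s \<Longrightarrow> {\<omega> \<in> space M. psi j s \<omega> = c} \<in> sets M"
  using measurable_sets[OF measurable_psi, of j s "{c}"] by (simp add: vimage_def Int_def conj_commute)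

lemma sets_cylinder: "cylinder t h \<in> sets M"
proof -
  have "cylinder t h = {\<omega> \<in> space M. \<forall>s\<in>{2..t}. \<forall>j\<in>{..<n}. psi j s \<omega> = h j s}"
    unfolding cylinder_def by auto
  also have "\<dots> \<in> sets M"
    by (intro sets.sets_Collect_countable_All' sets_psi_eq) auto
  finally show ?thesis .
qed

lemma sets_cylinder_psi_eq:
  "i < n \<Longrightarrow> 1 \<le> t \<Longrightarrow> {\<omega> \<in> cylinder t h. psi i (Suc t) \<omega> = v} \<in> sets M"
  using sets.Int[OF sets_cylinder sets_psi_eq[of i "Suc t" v]] by (simp add: cylinder_def Int_def conj_ac)

lemma sets_avoiding: "i < n \<Longrightarrow> 1 \<le> m \<Longrightarrow> avoiding i v m t \<in> sets M"
  unfolding avoiding_def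
  by (intro sets.sets_Collect_countable_All') (use sets_psi_eq[of i _ "\<not> v"] in auto)

lemma history_subset: "history t \<omega> \<subseteq> {..<n} \<times> {2..t}"
  unfolding history_def by auto

lemma history_eq_if_in_cylinder:
  "S \<subseteq> {..<n} \<times> {2..t} \<Longrightarrow> \<omega> \<in> cylinder t (\<lambda>j s. (j, s) \<in> S) \<Longrightarrow> history t \<omega> = S"
  unfolding cylinder_def history_def by auto

lemma in_cylinder_history: "\<omega> \<in> space M \<Longrightarrow> \<omega> \<in> cylinder t (\<lambda>j s. (j, s) \<in> history t \<omega>)"
  unfolding cylinder_def history_def by auto

text \<open>The event \<open>psi i (t + 1) = v\<close> contains the event that, in addition, every other agent
  declares its more likely value, which has conditional probability at least \<open>1/2\<close>.\<close>

lemma measure_cylinder_psi_eq_ge: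
  assumes t: "1 \<le> t" and i: "i < n" and d: "0 \<le> d" "d \<le> (if v then P h t i else 1 - P h t i)"
  shows "d * (1/2) ^ (n - 1) * measure M (cylinder t h)
    \<le> measure M {\<omega> \<in> cylinder t h. psi i (Suc t) \<omega> = v}"
proof -
  define x where "x j = (if j = i then v else 1/2 \<le> P h t j)" for j
  have "d * (1/2) ^ (n - 1) = (\<Prod>j<n. if j = i then d else 1/2)"
    by (rule prod_lessThan_if_eq[OF i, symmetric])
  also have "\<dots> \<le> (\<Prod>j<n. if x j then P h t j else 1 - P h t j)"
    using d unfolding x_def by (intro prod_mono) auto
  finally have "d * (1/2) ^ (n - 1) * measure M (cylinder t h)
      \<le> measure M (cylinder t h) * (\<Prod>j<n. if x j then P h t j else 1 - P h t j)"
    by (simp add: mult.commute mult_left_mono)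
  also have "\<dots> = measure M {\<omega> \<in> cylinder t h. \<forall>j<n. psi j (Suc t) \<omega> = x j}"
    using measure_next_declarations[OF t, of h x] unfolding cylinder_def by simp
  also have "\<dots> \<le> measure M {\<omega> \<in> cylinder t h. psi i (Suc t) \<omega> = v}"
    using i sets_cylinder_psi_eq[OF i t] by (intro finite_measure_mono) (auto simp: x_def)
  finally show ?thesis .
qed

text \<open>An event determined by the declarations up to time \<open>t\<close> is a finite disjoint union of
  cylinders, so the conditional bound carries over to it.\<close>

lemma measure_history_event_psi_eq_ge:
  assumes t: "1 \<le> t" and i: "i < n" and d: "0 \<le> d" "\<And>h. d \<le> (if v then P h t i else 1 - P h t i)"
  shows "d * (1/2) ^ (n - 1) * measure M {\<omega> \<in> space M. R (history t \<omega>)}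
    \<le> measure M {\<omega> \<in> space M. R (history t \<omega>) \<and> psi i (Suc t) \<omega> = v}"
proof -
  define Q where "Q = {S \<in> Pow ({..<n} \<times> {2..t}). R S}"
  define C where "C S = cylinder t (\<lambda>j s. (j, s) \<in> S)" for S
  have "finite Q" unfolding Q_def by auto
  have event_eq: "{\<omega> \<in> space M. R (history t \<omega>)} = (\<Union>S\<in>Q. C S)"
  proof (intro equalityI subsetI)
    fix \<omega> assume \<omega>: "\<omega> \<in> {\<omega> \<in> space M. R (history t \<omega>)}"
    have "history t \<omega> \<in> Q" "\<omega> \<in> C (history t \<omega>)"
      using \<omega> history_subset[of t \<omega>] in_cylinder_history[of \<omega> t] unfolding Q_def C_def by auto
    then show "\<omega> \<in> (\<Union>S\<in>Q. C S)" by blast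
  next
    fix \<omega> assume "\<omega> \<in> (\<Union>S\<in>Q. C S)"
    then obtain S where S: "S \<in> Q" "\<omega> \<in> C S" by blast
    then have "history t \<omega> = S"
      using history_eq_if_in_cylinder[of S t \<omega>] unfolding Q_def C_def by simp
    then show "\<omega> \<in> {\<omega> \<in> space M. R (history t \<omega>)}"
      using S sets.sets_into_space[OF sets_cylinder] unfolding Q_def C_def by auto
  qed
  then have event_psi_eq: "{\<omega> \<in> space M. R (history t \<omega>) \<and> psi i (Suc t) \<omega> = v}
      = (\<Union>S\<in>Q. {\<omega> \<in> C S. psi i (Suc t) \<omega> = v})"
    by blast
  have disjoint: "disjoint_family_on C Q"
    "disjoint_family_on (\<lambda>S. {\<omega> \<in> C S. psi i (Suc t) \<omega> = v}) Q"
    unfolding disjoint_family_on_def Q_def C_def using history_eq_if_in_cylinder by blast+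
  have "d * (1/2) ^ (n - 1) * measure M {\<omega> \<in> space M. R (history t \<omega>)}
      = (\<Sum>S\<in>Q. d * (1/2) ^ (n - 1) * measure M (C S))"
    unfolding event_eq sum_distrib_left[symmetric]
    using \<open>finite Q\<close> disjoint(1) by (subst finite_measure_finite_Union) (auto simp: C_def sets_cylinder)
  also have "\<dots> \<le> (\<Sum>S\<in>Q. measure M {\<omega> \<in> C S. psi i (Suc t) \<omega> = v})"
    unfolding C_def using measure_cylinder_psi_eq_ge[OF t i d(1) d(2)] by (intro sum_mono)
  also have "\<dots> = measure M {\<omega> \<in> space M. R (history t \<omega>) \<and> psi i (Suc t) \<omega> = v}"
    unfolding event_psi_eq using \<open>finite Q\<close> disjoint(2) sets_cylinder_psi_eq[OF i t]
    by (subst finite_measure_finite_Union) (auto simp: C_def)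
  finally show ?thesis .
qed

lemma measure_avoiding_Suc_le:
  assumes i: "i < n" and m: "1 \<le> m" "m \<le> t"
    and d: "0 \<le> d" "\<And>h. d \<le> (if v then P h t i else 1 - P h t i)"
  shows "measure M (avoiding i v m (Suc t)) \<le> (1 - d * (1/2) ^ (n - 1)) * measure M (avoiding i v m t)"
proof -
  define R where "R S \<longleftrightarrow> (\<forall>s\<in>{Suc m..t}. ((i, s) \<in> S) \<noteq> v)" for S
  define hits where "hits = {\<omega> \<in> avoiding i v m t. psi i (Suc t) \<omega> = v}"
  have "avoiding i v m t = {\<omega> \<in> space M. R (history t \<omega>)}"
    and "hits = {\<omega> \<in> space M. R (history t \<omega>) \<and> psi i (Suc t) \<omega> = v}"
    using i m unfolding avoiding_def hits_def R_def history_def by auto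
  then have "d * (1/2) ^ (n - 1) * measure M (avoiding i v m t) \<le> measure M hits"
    using measure_history_event_psi_eq_ge[OF _ i d] m by simp
  moreover have "avoiding i v m (Suc t) = avoiding i v m t - hits"
    using m unfolding avoiding_def hits_def by (auto simp: le_Suc_eq)
  moreover have "hits \<in> sets M" "hits \<subseteq> avoiding i v m t"
    using sets.Int[OF sets_avoiding[OF i m(1)] sets_psi_eq[of i "Suc t" v]] i m
    unfolding hits_def by (auto simp: Int_def avoiding_def conj_ac)
  ultimately show ?thesis
    using sets_avoiding[OF i m(1)] by (simp add: finite_measure_Diff algebra_simps)
qed

lemma measure_avoiding_le_prod:
  assumes i: "i < n" and m: "1 \<le> m" "m \<le> t" and c: "0 < c" "c \<le> 1"
    and law: "\<And>h t. 1 \<le> t \<Longrightarrow> c / t \<le> (if v then P h t i else 1 - P h t i)"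
  shows "measure M (avoiding i v m t) \<le> (\<Prod>k\<in>{m..<t}. 1 - c * (1/2) ^ (n - 1) / real k)"
  using m(2)
proof (induction t rule: nat_induct_at_least)
  case base
  show ?case by simp
next
  case (Suc t)
  define a where "a = c * (1/2) ^ (n - 1)"
  have "a \<le> 1 * 1"
    unfolding a_def using c by (intro mult_mono) (auto simp: power_le_one)
  then have "0 \<le> 1 - a / real t"
    using Suc.hyps m by (simp add: divide_le_eq_1)
  have "measure M (avoiding i v m (Suc t)) \<le> (1 - c / t * (1/2) ^ (n - 1)) * measure M (avoiding i v m t)"
    using Suc.hyps m c law by (intro measure_avoiding_Suc_le[OF i]) auto
  also have "\<dots> \<le> (1 - a / real t) * (\<Prod>k\<in>{m..<t}. 1 - a / real k)"
    using Suc.IH \<open>0 \<le> 1 - a / real t\<close> unfolding a_def by (simp add: mult_left_mono)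
  finally show ?case
    using Suc.hyps unfolding a_def by (simp add: prod.atLeastLessThan_Suc mult.commute)
qed

lemma AE_infinite_psi_eq:
  assumes i: "i < n" and c: "0 < c" "c \<le> 1"
    and law: "\<And>h t. 1 \<le> t \<Longrightarrow> c / t \<le> (if v then P h t i else 1 - P h t i)"
  shows "AE \<omega> in M. infinite {t. psi i t \<omega> = v}"
proof -
  define c' where "c' = c * (1/2) ^ (n - 1)"
  have c': "0 < c'" "c' \<le> 1"
    unfolding c'_def using c by (auto intro: mult_le_one simp: power_le_one)
  have "AE \<omega> in M. \<exists>s>m. psi i s \<omega> = v" if m: "1 \<le> m" for m
  proof (rule AE_I')
    define E where "E = {\<omega> \<in> space M. \<forall>s\<in>{Suc m..}. psi i s \<omega> \<noteq> v}"
    have "E \<in> sets M"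
      unfolding E_def by (intro sets.sets_Collect_countable_All') (use sets_psi_eq[of i _ "\<not> v"] i m in auto)
    have "measure M E \<le> (\<Prod>k\<in>{m..<t}. 1 - c' / real k)" if "m \<le> t" for t
    proof -
      have "measure M E \<le> measure M (avoiding i v m t)"
        using \<open>E \<in> sets M\<close> sets_avoiding[OF i m] by (intro finite_measure_mono) (auto simp: E_def avoiding_def)
      also have "\<dots> \<le> (\<Prod>k\<in>{m..<t}. 1 - c' / real k)"
        unfolding c'_def using measure_avoiding_le_prod[OF i m that c law] by simp
      finally show ?thesis .
    qed
    then have "measure M E \<le> 0"
      by (intro LIMSEQ_le_const[OF LIMSEQ_prod_one_minus_inverse[OF c' m]]) auto
    then show "E \<in> null_sets M"
      using \<open>E \<in> sets M\<close> by (simp add: null_sets_def emeasure_eq_measure measure_le_0_iff)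
    show "{\<omega> \<in> space M. \<not> (\<exists>s>m. psi i s \<omega> = v)} \<subseteq> E"
      unfolding E_def by auto
  qed
  then have AE_unbounded: "AE \<omega> in M. \<forall>m. \<exists>s>Suc m. psi i s \<omega> = v"
    by (simp add: AE_all_countable)
  have unbounded: "infinite {s. p s}" if "\<forall>m. \<exists>s>Suc m. p s" for p :: "nat \<Rightarrow> bool"
    unfolding infinite_nat_iff_unbounded using that Suc_lessD by blast
  show ?thesis
    using AE_unbounded by (rule eventually_mono) (rule unbounded)
qed

end

lemma beta_closed_form:
  "beta b h k (Suc t) = (b k + (\<Sum>s\<in>{2..Suc t}. if h k s then 1 else 0)) / real (Suc t)"
proof (induction t)
  case (Suc t)
  define S where "S = (\<Sum>s\<in>{2..Suc t}. if h k s then 1 else 0 :: real)"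
  define I where "I = (if h k (Suc (Suc t)) then 1 else 0 :: real)"
  have "{2..Suc (Suc t)} = insert (Suc (Suc t)) {2..Suc t}" by auto
  then have sum_Suc: "(\<Sum>s\<in>{2..Suc (Suc t)}. if h k s then 1 else 0) = S + I"
    unfolding S_def I_def by simp
  have cancel: "a / c * (x / a) = x / c" if "a \<noteq> 0" for a c x :: real
    using that by simp
  have "beta b h k (Suc (Suc t)) = real (Suc t) / real (Suc (Suc t)) * ((b k + S) / real (Suc t))
      + I / real (Suc (Suc t))"
    using Suc.IH unfolding S_def I_def by simp
  also have "\<dots> = (b k + S + I) / real (Suc (Suc t))"
    by (subst cancel) (simp_all add: add_divide_distrib)
  finally show ?case unfolding sum_Suc by (simp add: add.assoc)
qed simp

lemma beta_bounds:
  assumes "m \<le> b k" "b k \<le> 1 - m"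
  shows "m / real (Suc t) \<le> beta b h k (Suc t) \<and> beta b h k (Suc t) \<le> 1 - m / real (Suc t)"
proof -
  define S where "S = (\<Sum>s\<in>{2..Suc t}. if h k s then 1 else 0 :: real)"
  have "0 \<le> S" unfolding S_def by (intro sum_nonneg) auto
  moreover have "S \<le> (\<Sum>s\<in>{2..Suc t}. 1)" unfolding S_def by (intro sum_mono) auto
  then have "S \<le> real t" by simp
  ultimately have "m \<le> b k + S" "b k + S \<le> real (Suc t) - m"
    using assms by auto
  moreover have "(real (Suc t) - m) / real (Suc t) = 1 - m / real (Suc t)"
    by (simp add: diff_divide_distrib)
  ultimately show ?thesis
    unfolding beta_closed_form S_def[symmetric] by (metis divide_right_mono of_nat_0_le_iff)
qed

lemma deg_pos:
  assumes nonneg: "\<forall>i<n. \<forall>j<n. A i j \<ge> 0"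
    and conn: "graph_connected n A"
    and nonbip: "\<not> graph_bipartite n A"
    and i: "i < n"
  shows "deg n A i > 0"
proof (rule ccontr)
  assume "\<not> deg n A i > 0"
  moreover have "deg n A i \<ge> 0" unfolding deg_def using nonneg i by (intro sum_nonneg) auto
  ultimately have "(\<Sum>j<n. A i j) = 0" unfolding deg_def by simp
  then have isolated: "\<forall>j<n. A i j = 0" using nonneg i by (subst (asm) sum_nonneg_eq_0_iff) auto
  show False
  proof (cases "\<exists>j<n. j \<noteq> i")
    case True
    then obtain j where j: "j < n" "j \<noteq> i" by auto
    have "(i, j) \<in> (edge_rel n A)\<^sup>*" using conn i j unfolding graph_connected_def by auto
    then show False
      using j isolated by (cases rule: converse_rtranclE) (auto simp: edge_rel_def)
  next
    case False
    then have "graph_bipartite n A"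
      unfolding graph_bipartite_def using isolated by (intro exI[of _ "\<lambda>_. True"]) (metis less_irrefl)
    then show False using nonbip by simp
  qed
qed

lemma mu_between:
  assumes "deg n A i > 0" and "\<forall>j<n. A i j \<ge> 0"
    and "\<forall>j<n. lo \<le> \<beta> j \<and> \<beta> j \<le> hi"
  shows "lo \<le> mu n A \<beta> i \<and> mu n A \<beta> i \<le> hi"
proof -
  have "lo * deg n A i \<le> (\<Sum>j<n. A i j * \<beta> j)"
    unfolding deg_def sum_distrib_left using assms(2,3) by (intro sum_mono) (simp add: mult.commute mult_right_mono)
  moreover have "(\<Sum>j<n. A i j * \<beta> j) \<le> hi * deg n A i"
    unfolding deg_def sum_distrib_left using assms(2,3) by (intro sum_mono) (simp add: mult.commute mult_right_mono)
  ultimately show ?thesis using assms(1) unfolding mu_def by (simp add: field_simps)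
qed

lemma fbias_bounds:
  assumes g: "0 < \<gamma>" and m: "0 \<le> \<mu>" "\<mu> \<le> 1"
  shows "min \<gamma> (1/\<gamma>) * \<mu> \<le> fbias \<mu> \<gamma> \<and> min \<gamma> (1/\<gamma>) * (1 - \<mu>) \<le> 1 - fbias \<mu> \<gamma>"
proof -
  define \<kappa> where "\<kappa> = min \<gamma> (1/\<gamma>)"
  define D where "D = (1 - \<mu>) * 1 + \<mu> * \<gamma>"
  have "min 1 \<gamma> = (1 - \<mu>) * min 1 \<gamma> + \<mu> * min 1 \<gamma>"
    by (simp add: algebra_simps)
  also have "\<dots> \<le> D"
    unfolding D_def using m by (intro add_mono mult_left_mono) auto
  finally have D0: "0 < D" using g by simp
  have "D \<le> max 1 \<gamma>"
    using convex_bound_le[of 1 "max 1 \<gamma>" \<gamma> "1 - \<mu>" \<mu>] m unfolding D_def by auto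
  moreover have "\<kappa> * max 1 \<gamma> = min \<gamma> 1"
  proof (cases "1 \<le> \<gamma>")
    case True
    moreover have "1 / \<gamma> \<le> 1" using True by simp
    ultimately have "1 / \<gamma> \<le> \<gamma>" by linarith
    then show ?thesis using True g unfolding \<kappa>_def by simp
  next
    case False
    moreover have "1 \<le> 1 / \<gamma>" using False g by simp
    ultimately have "\<gamma> \<le> 1 / \<gamma>" by linarith
    then show ?thesis using False unfolding \<kappa>_def by simp
  qed
  moreover have "0 \<le> \<kappa>" unfolding \<kappa>_def using g by simp
  ultimately have "\<kappa> * D \<le> min \<gamma> 1"
    by (metis mult_left_mono)
  then have "\<kappa> * D * \<mu> \<le> \<gamma> * \<mu>" "\<kappa> * D * (1 - \<mu>) \<le> 1 * (1 - \<mu>)"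
    using m by (intro mult_right_mono; simp)+
  then have "\<kappa> * \<mu> \<le> \<gamma> * \<mu> / D" "\<kappa> * (1 - \<mu>) \<le> (1 - \<mu>) / D"
    using D0 by (simp_all add: pos_le_divide_eq mult_ac)
  moreover have "fbias \<mu> \<gamma> = \<gamma> * \<mu> / D" "1 - fbias \<mu> \<gamma> = (1 - \<mu>) / D"
    using D0 unfolding fbias_def D_def by (simp_all add: field_simps)
  ultimately show ?thesis unfolding \<kappa>_def by simp
qed


lemma declaration_prob_ge_inverse_time:
  assumes nonneg: "\<forall>i<n. \<forall>j<n. A i j \<ge> 0"
    and conn: "graph_connected n A" and nonbip: "\<not> graph_bipartite n A"
    and binit: "\<forall>k<n. 0 < b k \<and> b k < 1"
    and g: "0 < \<gamma> i" and i: "i < n"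
  obtains c where "0 < c" "c \<le> 1"
    "\<And>h t v. 1 \<le> t \<Longrightarrow> c / real t \<le> (if v then fbias (mu n A (\<lambda>k. beta b h k t) i) (\<gamma> i)
                                        else 1 - fbias (mu n A (\<lambda>k. beta b h k t) i) (\<gamma> i))"
proof
  define m where "m = Min ((\<lambda>k. min (b k) (1 - b k)) ` {..<n})"
  define \<kappa> where "\<kappa> = min (\<gamma> i) (1 / \<gamma> i)"
  have "m \<le> min (b k) (1 - b k)" if "k < n" for k
    unfolding m_def using that by (intro Min_le) auto
  then have m: "m \<le> b k" "b k \<le> 1 - m" if "k < n" for k
    using that by (simp_all add: le_diff_eq add.commute)
  have "0 < m" unfolding m_def using binit i by (subst Min_gr_iff) auto
  moreover have "0 < \<kappa>" "\<kappa> \<le> 1" unfolding \<kappa>_def using g by (auto simp: min_le_iff_disj)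
  moreover have "m \<le> 1" using m[OF i] binit i by simp
  ultimately show "0 < \<kappa> * m" "\<kappa> * m \<le> 1" by (auto intro: mult_le_one)
  fix h t v assume "1 \<le> (t::nat)"
  then obtain t' where t: "t = Suc t'" using not0_implies_Suc by fastforce
  define \<mu> where "\<mu> = mu n A (\<lambda>k. beta b h k t) i"
  have "\<forall>k<n. m / t \<le> beta b h k t \<and> beta b h k t \<le> 1 - m / t"
    unfolding t using beta_bounds m by blast
  then have "m / t \<le> \<mu> \<and> \<mu> \<le> 1 - m / t"
    unfolding \<mu>_def using deg_pos[OF nonneg conn nonbip i] nonneg i by (intro mu_between) auto
  then have \<mu>: "m / t \<le> \<mu>" "\<mu> \<le> 1 - m / t" by auto
  have "0 \<le> m / t" using \<open>0 < m\<close> by simp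
  then have "\<kappa> * \<mu> \<le> fbias \<mu> (\<gamma> i) \<and> \<kappa> * (1 - \<mu>) \<le> 1 - fbias \<mu> (\<gamma> i)"
    unfolding \<kappa>_def using g \<mu> by (intro fbias_bounds) auto
  moreover have "\<kappa> * (m / t) \<le> \<kappa> * \<mu>" "\<kappa> * (m / t) \<le> \<kappa> * (1 - \<mu>)"
    using \<mu> \<open>0 < \<kappa>\<close> by (intro mult_left_mono; simp)+
  ultimately have "\<kappa> * m / t \<le> fbias \<mu> (\<gamma> i)" "\<kappa> * m / t \<le> 1 - fbias \<mu> (\<gamma> i)"
    by auto
  then show "\<kappa> * m / real t \<le> (if v then fbias (mu n A (\<lambda>k. beta b h k t) i) (\<gamma> i)
                                   else 1 - fbias (mu n A (\<lambda>k. beta b h k t) i) (\<gamma> i))"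
    unfolding \<mu>_def[symmetric] by simp
qed

theorem lemma2:
  fixes M :: "'a measure"
    and n :: nat
    and A :: "nat \<Rightarrow> nat \<Rightarrow> real"
    and \<gamma> :: "nat \<Rightarrow> real"
    and b :: "nat \<Rightarrow> real"
    and \<psi> :: "nat \<Rightarrow> nat \<Rightarrow> 'a \<Rightarrow> bool"
  assumes "prob_space M"
    and sym: "\<forall>i<n. \<forall>j<n. A i j = A j i"
    and nonneg: "\<forall>i<n. \<forall>j<n. A i j \<ge> 0"
    and conn: "graph_connected n A"
    and nonbip: "\<not> graph_bipartite n A"
    and gpos: "\<forall>i<n. \<gamma> i > 0"
    and gnotI: "\<exists>i<n. \<gamma> i \<noteq> 1"
    and binit: "\<forall>i<n. 0 < b i \<and> b i < 1"
    and meas: "\<forall>i<n. \<forall>t\<ge>2. \<psi> i t \<in> measurable M (count_space UNIV)"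
    and dyn: "\<forall>t\<ge>1. \<forall>(h :: nat \<Rightarrow> nat \<Rightarrow> bool) (x :: nat \<Rightarrow> bool).
       measure M {\<omega> \<in> space M. (\<forall>s\<in>{2..t}. \<forall>j<n. \<psi> j s \<omega> = h j s)
                                  \<and> (\<forall>j<n. \<psi> j (t + 1) \<omega> = x j)}
       = measure M {\<omega> \<in> space M. \<forall>s\<in>{2..t}. \<forall>j<n. \<psi> j s \<omega> = h j s}
         * (\<Prod>j<n. let p = fbias (mu n A (\<lambda>k. beta b h k t) j) (\<gamma> j)
                     in if x j then p else 1 - p)"
  shows "\<forall>i<n. AE \<omega> in M. infinite {t. \<psi> i t \<omega>} \<and> infinite {t. \<not> \<psi> i t \<omega>}"
proof (intro allI impI)
  interpret declaration_process M n \<psi> "\<lambda>h t j. fbias (mu n A (\<lambda>k. beta b h k t) j) (\<gamma> j)"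
    by (intro declaration_process.intro declaration_process_axioms.intro \<open>prob_space M\<close>)
      (use meas dyn in \<open>auto simp: Let_def\<close>)
  fix i assume i: "i < n"
  obtain c where "0 < c" "c \<le> 1" and law:
    "\<And>h t v. 1 \<le> t \<Longrightarrow> c / real t \<le> (if v then fbias (mu n A (\<lambda>k. beta b h k t) i) (\<gamma> i)
                                        else 1 - fbias (mu n A (\<lambda>k. beta b h k t) i) (\<gamma> i))"
    using declaration_prob_ge_inverse_time[OF nonneg conn nonbip binit] gpos i by metis
  have "AE \<omega> in M. infinite {t. \<psi> i t \<omega> = v}" for v
    using AE_infinite_psi_eq[OF i \<open>0 < c\<close> \<open>c \<le> 1\<close> law] .
  from this[of True] this[of False]
  show "AE \<omega> in M. infinite {t. \<psi> i t \<omega>} \<and> infinite {t. \<not> \<psi> i t \<omega>}"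
    by eventually_elim simp
qed

end
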